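(* For $0\le t_1\le t_2\le\infty$ and $z>0$ let $V_{[t_1,t_2],z}=\{(x,y)\in[0,\infty]\times(0,\infty]: x\in[t_1,t_2],\ y>z\}$. Let $\{(Z_{1t},Z_{2t})\}_{t>0}$ be a family of pairs of nonnegative random variables and $\nu$ a Radon measure on $[0,\infty]\times(0,\infty]$ such that: (A) whenever $\nu(\partial V_{[t_1,t_2],z})=0$, we have $t\,\mathbb P[(Z_{1t},Z_{2t})\in V_{[t_1,t_2],z}]\to\nu(V_{[t_1,t_2],z})$ as $t\to\infty$; (B) for every $z_0\in(0,\infty)$, $t\,\mathbb P[(Z_{1t},Z_{2t})\in V_{[0,\infty],z_0}]\to f(z_0)\in(0,\infty)$ as $t\to\infty$. Then $t\,\mathbb P[(Z_{1t},Z_{2t})\in\cdot]\xrightarrow{\mathrm v}\nu(\cdot)$ in $M_+([0,\infty]\times(0,\infty])$ as $t\to\infty$.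
   Context: Vague convergence $\mu_t\xrightarrow{\mathrm v}\mu$ in $M_+(\mathsf S)$ (the space of nonnegative Radon measures on $\mathsf S$) means $\mu_t(C)\to\mu(C)$ for every relatively compact $C\subset\mathsf S$ with $\mu(\partial C)=0$. *)

theory Defs
  imports "HOL-Probability.Probability"
begin

definition Sset :: "(ereal \<times> ereal) set" where
  "Sset = {0..\<infinity>} \<times> {0<..\<infinity>}"

definition STop :: "(ereal \<times> ereal) topology" where
  "STop = subtopology euclidean Sset"

definition Vset :: "ereal \<Rightarrow> ereal \<Rightarrow> real \<Rightarrow> (ereal \<times> ereal) set" where
  "Vset t1 t2 z = {(x, y) \<in> Sset. t1 \<le> x \<and> x \<le> t2 \<and> ereal z < y}"

definition radon_on_S :: "(ereal \<times> ereal) measure \<Rightarrow> bool" where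
  "radon_on_S \<nu> \<longleftrightarrow> sets \<nu> = sets (restrict_space borel Sset) \<and>
     (\<forall>K. compactin STop K \<longrightarrow> emeasure \<nu> K < \<infinity>)"

definition vague_tendsto ::
  "(real \<Rightarrow> (ereal \<times> ereal) set \<Rightarrow> ennreal) \<Rightarrow> (ereal \<times> ereal) measure \<Rightarrow> bool" where
  "vague_tendsto \<mu> \<nu> \<longleftrightarrow>
     (\<forall>C. C \<subseteq> Sset \<and> C \<in> sets \<nu> \<and> compactin STop (STop closure_of C) \<and>
          emeasure \<nu> (STop frontier_of C) = 0 \<longrightarrow>
          ((\<lambda>t. \<mu> t C) \<longlongrightarrow> emeasure \<nu> C) at_top)"

end

(*
  Fix C with compact closure and \<nu>(\<partial>C) = 0; its closure lies in {y > \<beta>} for some \<beta> > 0.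
  Apart from countably many levels, the vertical segments {a} \<times> [\<beta>, \<infinity>] and the horizontal
  lines y = b carry no \<nu>-mass, so we may pick dense sequences of such levels.  The quadrants
  {x \<le> a, y > c} over these levels have \<nu>-null boundary, hence converge by (A); they are stable
  under intersection, so every finite Boolean combination of them converges too, in particular
  every cell of the grid formed by the first n levels.  The cells inside C and the cells meeting C
  sandwich C.  A cell that meets C without lying inside it is connected and therefore meets \<partial>C;
  as the grid refines, these cells shrink to the closed set \<partial>C, whose \<nu>-measure is 0.
*)

theory Submission
  imports Defs
begin

definition Unions_Diff :: "'a set set \<Rightarrow> 'a set set" where
  "Unions_Diff \<P> = {\<Union>U - \<Union>V | U V. finite U \<and> U \<subseteq> \<P> \<and> finite V \<and> V \<subseteq> \<P>}"

lemma Unions_DiffI: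
  "finite U \<Longrightarrow> U \<subseteq> \<P> \<Longrightarrow> finite V \<Longrightarrow> V \<subseteq> \<P> \<Longrightarrow> \<Union>U - \<Union>V \<in> Unions_Diff \<P>"
  unfolding Unions_Diff_def by blast

lemma Unions_Diff_Int:
  assumes Int: "\<And>P Q. P \<in> \<P> \<Longrightarrow> Q \<in> \<P> \<Longrightarrow> P \<inter> Q \<in> \<P>"
    and "A \<in> Unions_Diff \<P>" "B \<in> Unions_Diff \<P>"
  shows "A \<inter> B \<in> Unions_Diff \<P>"
proof -
  obtain U V U' V' where A: "A = \<Union>U - \<Union>V" "finite U" "U \<subseteq> \<P>" "finite V" "V \<subseteq> \<P>"
    and B: "B = \<Union>U' - \<Union>V'" "finite U'" "U' \<subseteq> \<P>" "finite V'" "V' \<subseteq> \<P>"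
    using assms(2,3) unfolding Unions_Diff_def by blast
  have "A \<inter> B = \<Union>((\<lambda>(P, Q). P \<inter> Q) ` (U \<times> U')) - \<Union>(V \<union> V')"
    unfolding A B by auto
  also have "\<dots> \<in> Unions_Diff \<P>"
    using A B by (intro Unions_DiffI) (auto intro: Int)
  finally show ?thesis .
qed

lemma Diff_in_Unions_Diff: "P \<in> \<P> \<Longrightarrow> Q \<in> \<P> \<Longrightarrow> P - Q \<in> Unions_Diff \<P>"
  using Unions_DiffI[of "{P}" \<P> "{Q}"] by simp

lemma in_Unions_Diff: "P \<in> \<P> \<Longrightarrow> P \<in> Unions_Diff \<P>"
  using Unions_DiffI[of "{P}" \<P> "{}"] by simp

lemma real_between_outside_countable:
  fixes B :: "real set"
  assumes "countable B" "a < b"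
  obtains c where "a < c" "c < b" "c \<notin> B"
proof -
  have "uncountable {a<..<b}" using assms(2) by (simp add: uncountable_open_interval)
  then have "\<not> {a<..<b} \<subseteq> B" using assms(1) countable_subset by blast
  then obtain c where "c \<in> {a<..<b}" "c \<notin> B" by blast
  then show ?thesis using that by auto
qed

lemma dense_sequence_avoiding:
  fixes B :: "real set"
  assumes "countable B"
  shows "\<exists>g :: nat \<Rightarrow> real. (\<forall>k. L < g k \<and> g k \<notin> B) \<and>
    (\<forall>u v. L \<le> u \<longrightarrow> u < v \<longrightarrow> (\<exists>k. u < g k \<and> g k < v))"
proof -
  define lo where "lo pq = max L (of_rat (fst pq))" for pq :: "rat \<times> rat"
  define hi where "hi pq = (if lo pq < of_rat (snd pq) then of_rat (snd pq) else lo pq + 1)" for pq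
  have "\<exists>c. lo pq < c \<and> c < hi pq \<and> c \<notin> B" for pq
    using real_between_outside_countable[OF assms, of "lo pq" "hi pq"] by (force simp: hi_def)
  then obtain c where c: "\<And>pq. lo pq < c pq \<and> c pq < hi pq \<and> c pq \<notin> B" by metis
  show ?thesis
  proof (intro exI[of _ "c \<circ> from_nat"] conjI allI impI)
    show "L < (c \<circ> from_nat) k" "(c \<circ> from_nat) k \<notin> B" for k
      using c[of "from_nat k"] by (auto simp: lo_def)
  next
    fix u v :: real assume "L \<le> u" "u < v"
    obtain p where p: "u < of_rat p" "of_rat p < v" using of_rat_dense[OF \<open>u < v\<close>] by blast
    obtain q where q: "(of_rat p :: real) < of_rat q" "of_rat q < v" using of_rat_dense[OF p(2)] by blast
    have "u < c (p, q) \<and> c (p, q) < v"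
      using c[of "(p, q)"] p q \<open>L \<le> u\<close> by (auto simp: lo_def hi_def)
    then show "\<exists>k. u < (c \<circ> from_nat) k \<and> (c \<circ> from_nat) k < v"
      by (metis comp_apply from_nat_to_nat)
  qed
qed

lemma dense_cuts_localize:
  fixes g :: "nat \<Rightarrow> real" and x :: ereal
  assumes dense: "\<And>u v. L \<le> u \<Longrightarrow> u < v \<Longrightarrow> \<exists>k. u < g k \<and> g k < v"
    and U: "open U" "x \<in> U" and "ereal L \<le> x"
  obtains n where "\<And>x'. ereal L \<le> x' \<Longrightarrow>
    (\<forall>k<n. x' \<le> ereal (g k) \<longleftrightarrow> x \<le> ereal (g k)) \<Longrightarrow> x' \<in> U"
proof -
  have cut_between: "\<exists>k. a < ereal (g k) \<and> ereal (g k) < b" if "ereal L \<le> a" "a < b" for a b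
  proof -
    obtain u where u: "a < ereal u" "ereal u < b" using ereal_dense2[OF \<open>a < b\<close>] by blast
    obtain v where v: "ereal u < ereal v" "ereal v < b" using ereal_dense2[OF u(2)] by blast
    have "ereal L < ereal u" using that(1) u(1) by (rule le_less_trans)
    then have "L \<le> u" by simp
    then obtain k where "u < g k" "g k < v" using dense v(1) by auto
    then have "ereal u < ereal (g k)" "ereal (g k) < ereal v" by simp_all
    then show ?thesis using u(1) v(2) by (meson less_trans)
  qed
  obtain n1 where n1: "\<And>x'. x \<le> x' \<Longrightarrow>
    (\<forall>k<n1. x' \<le> ereal (g k) \<longleftrightarrow> x \<le> ereal (g k)) \<Longrightarrow> x' \<in> U"
  proof (cases "x = \<infinity>")
    case False
    then obtain b where b: "x < b" "{x..<b} \<subseteq> U"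
      using open_right[OF U, of \<infinity>] by (auto simp: less_top)
    then obtain k where "x < ereal (g k)" "ereal (g k) < b" using cut_between \<open>ereal L \<le> x\<close> by blast
    then show ?thesis using b by (intro that[of "Suc k"]) force
  qed (use U in \<open>auto intro: that[of 0]\<close>)
  obtain n2 where n2: "\<And>x'. ereal L \<le> x' \<Longrightarrow> x' \<le> x \<Longrightarrow>
    (\<forall>k<n2. x' \<le> ereal (g k) \<longleftrightarrow> x \<le> ereal (g k)) \<Longrightarrow> x' \<in> U"
  proof (cases "x = ereal L")
    case False
    then obtain a where a: "a < x" "{a<..x} \<subseteq> U"
      using open_left[OF U, of "ereal L"] \<open>ereal L \<le> x\<close> by (auto simp: order.order_iff_strict)
    then obtain k where "max a (ereal L) < ereal (g k)" "ereal (g k) < x" using cut_between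
      by (metis False \<open>ereal L \<le> x\<close> max.cobounded2 max_less_iff_conj order_less_le)
    then show ?thesis using a by (intro that[of "Suc k"]) force
  qed (use U in \<open>auto intro: that[of 0]\<close>)
  show ?thesis
  proof (rule that[of "max n1 n2"])
    fix x' assume "ereal L \<le> x'" "\<forall>k<max n1 n2. x' \<le> ereal (g k) \<longleftrightarrow> x \<le> ereal (g k)"
    then show "x' \<in> U"
      using n1[of x'] n2[of x'] by (cases "x \<le> x'") auto
  qed
qed

lemma connected_same_side_of_cuts:
  fixes c :: "'a::linear_continuum_topology"
  assumes convex: "\<And>x y z. P x \<Longrightarrow> P y \<Longrightarrow> x \<le> z \<Longrightarrow> z \<le> y \<Longrightarrow> P z"
  shows "connected {x. P x \<and> (\<forall>k<n. x \<le> a k \<longleftrightarrow> c \<le> a k)}"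
  unfolding connected_iff_interval
proof (intro ballI allI impI, clarsimp)
  fix x y z assume "P x" "\<forall>k<n. x \<le> a k \<longleftrightarrow> c \<le> a k" "P y" "\<forall>k<n. y \<le> a k \<longleftrightarrow> c \<le> a k"
    "x \<le> z" "z \<le> y"
  then show "P z \<and> (\<forall>k<n. z \<le> a k \<longleftrightarrow> c \<le> a k)"
    using convex by (meson order_trans)
qed

lemma countable_charged_fibres:
  fixes p :: "'a \<Rightarrow> 'b::t1_space"
  assumes W: "W \<in> sets N" "emeasure N W < \<infinity>" and p: "p \<in> borel_measurable N"
  shows "countable {a. emeasure N (p -` {a} \<inter> W) \<noteq> 0}"
proof -
  let ?D = "distr (restrict_space N W) borel p"
  have W_space: "W \<inter> space N = W" using W(1) sets.sets_into_space by blast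
  have p_W: "p \<in> borel_measurable (restrict_space N W)" using p by (rule measurable_restrict_space1)
  have D_single: "emeasure ?D {a} = emeasure N (p -` {a} \<inter> W)" for a
    using p_W W(1)
    by (auto simp: emeasure_distr emeasure_restrict_space space_restrict_space W_space
        intro!: arg_cong[where f="emeasure N"])
  have "emeasure ?D (space ?D) = emeasure N W"
    using p_W W(1) by (simp add: emeasure_distr emeasure_restrict_space space_restrict_space W_space)
  then interpret D: finite_measure ?D using W(2) by (intro finite_measureI) auto
  have "{a. emeasure N (p -` {a} \<inter> W) \<noteq> 0} \<subseteq> {a. measure ?D {a} \<noteq> 0}"
    using D_single D.emeasure_eq_measure by (auto simp flip: D_single)
  then show ?thesis using D.countable_support countable_subset by blast
qed

definition measures_converge_on :: "(real \<Rightarrow> 'a measure) \<Rightarrow> 'a measure \<Rightarrow> 'a set \<Rightarrow> bool" where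
  "measures_converge_on \<mu> \<nu> K \<longleftrightarrow>
     K \<in> sets \<nu> \<and> emeasure \<nu> K < \<infinity> \<and> ((\<lambda>t. measure (\<mu> t) K) \<longlongrightarrow> measure \<nu> K) at_top"

locale finite_measure_family =
  fixes \<mu> :: "real \<Rightarrow> 'a measure" and \<nu> :: "'a measure"
  assumes finite_measure: "\<And>t. finite_measure (\<mu> t)"
    and sets_subset: "\<And>t. sets \<nu> \<subseteq> sets (\<mu> t)"
begin

abbreviation converges_on :: "'a set \<Rightarrow> bool" where
  "converges_on \<equiv> measures_converge_on \<mu> \<nu>"

lemma converges_on_empty: "converges_on {}"
  unfolding measures_converge_on_def by simp

lemma converges_on_Un:
  assumes K: "converges_on K" and K': "converges_on K'" and "K \<inter> K' = {}"
  shows "converges_on (K \<union> K')"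
proof -
  have sets: "K \<in> sets \<nu>" "K' \<in> sets \<nu>" and fin: "emeasure \<nu> K < \<infinity>" "emeasure \<nu> K' < \<infinity>"
    using K K' unfolding measures_converge_on_def by auto
  have "measure (\<mu> t) (K \<union> K') = measure (\<mu> t) K + measure (\<mu> t) K'" for t
    using sets sets_subset \<open>K \<inter> K' = {}\<close>
    by (intro finite_measure.finite_measure_Union[OF finite_measure]) auto
  moreover have "measure \<nu> (K \<union> K') = measure \<nu> K + measure \<nu> K'"
    using sets fin \<open>K \<inter> K' = {}\<close> by (intro measure_Union) auto
  moreover have "emeasure \<nu> (K \<union> K') < \<infinity>"
    using sets fin \<open>K \<inter> K' = {}\<close> by (simp add: plus_emeasure[symmetric])
  ultimately show ?thesis
    using K K' sets unfolding measures_converge_on_def by (auto intro: tendsto_add)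
qed

lemma converges_on_Diff:
  assumes K: "converges_on K" and K': "converges_on K'" and "K' \<subseteq> K"
  shows "converges_on (K - K')"
proof -
  have sets: "K \<in> sets \<nu>" "K' \<in> sets \<nu>" and fin: "emeasure \<nu> K < \<infinity>"
    using K K' unfolding measures_converge_on_def by auto
  have "measure (\<mu> t) (K - K') = measure (\<mu> t) K - measure (\<mu> t) K'" for t
    using sets sets_subset \<open>K' \<subseteq> K\<close>
    by (intro finite_measure.finite_measure_Diff[OF finite_measure]) auto
  moreover have "measure \<nu> (K - K') = measure \<nu> K - measure \<nu> K'"
    using sets fin \<open>K' \<subseteq> K\<close> by (intro measure_Diff) auto
  moreover have "emeasure \<nu> (K - K') < \<infinity>"
    using sets fin by (meson Diff_subset emeasure_mono le_less_trans)
  ultimately show ?thesis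
    using K K' sets unfolding measures_converge_on_def by (auto intro: tendsto_diff)
qed

lemma converges_on_disjoint_Union:
  "finite F \<Longrightarrow> (\<And>K. K \<in> F \<Longrightarrow> converges_on K) \<Longrightarrow> disjoint F \<Longrightarrow> converges_on (\<Union>F)"
proof (induction F rule: finite_induct)
  case (insert K F)
  then have "K \<inter> \<Union>F = {}" by (auto simp: disjoint_def)
  with insert show ?case by (auto intro: converges_on_Un simp: pairwise_insert)
qed (simp add: converges_on_empty)

lemma converges_on_Union_Int_stable:
  assumes Int: "\<And>P Q. P \<in> \<P> \<Longrightarrow> Q \<in> \<P> \<Longrightarrow> P \<inter> Q \<in> \<P>"
    and conv: "\<And>P. P \<in> \<P> \<Longrightarrow> converges_on P"
  shows "finite U \<Longrightarrow> U \<subseteq> \<P> \<Longrightarrow> converges_on (\<Union>U)"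
proof (induction "card U" arbitrary: U rule: less_induct)
  case less
  show ?case
  proof (cases "U = {}")
    case False
    then obtain P where P: "P \<in> U" by blast
    define U' where "U' = U - {P}"
    have "card U > 0" using less.prems P card_gt_0_iff by blast
    then have U': "finite U'" "U' \<subseteq> \<P>" "card U' < card U"
      using less.prems P unfolding U'_def by auto
    have "card ((\<inter>) P ` U') < card U" using U' card_image_le le_less_trans by blast
    then have PU': "converges_on (\<Union>((\<inter>) P ` U'))"
      using U' P less.prems by (intro less.hyps) (auto intro: Int)
    have "\<Union>U = \<Union>U' \<union> (P - \<Union>((\<inter>) P ` U'))" using P unfolding U'_def by blast
    moreover have "converges_on (P - \<Union>((\<inter>) P ` U'))"
      using P less.prems by (intro converges_on_Diff[OF conv PU']) auto
    ultimately show ?thesis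
      using less.hyps U' by (auto intro!: converges_on_Un)
  qed (simp add: converges_on_empty)
qed

lemma converges_on_Unions_Diff:
  assumes Int: "\<And>P Q. P \<in> \<P> \<Longrightarrow> Q \<in> \<P> \<Longrightarrow> P \<inter> Q \<in> \<P>"
    and conv: "\<And>P. P \<in> \<P> \<Longrightarrow> converges_on P"
    and "K \<in> Unions_Diff \<P>"
  shows "converges_on K"
proof -
  obtain U V where K: "K = \<Union>U - \<Union>V" "finite U" "U \<subseteq> \<P>" "finite V" "V \<subseteq> \<P>"
    using assms(3) unfolding Unions_Diff_def by blast
  have "K = \<Union>U - \<Union>((\<lambda>(P, Q). P \<inter> Q) ` (U \<times> V))" unfolding K by blast
  moreover have "(\<lambda>(P, Q). P \<inter> Q) ` (U \<times> V) \<subseteq> \<P>" using K(3,5) by (auto intro: Int)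
  ultimately show ?thesis
    using K by (auto intro!: converges_on_Diff converges_on_Union_Int_stable[OF Int conv])
qed

lemma converges_on_sandwich:
  assumes C: "C \<in> sets \<nu>" and A: "\<And>n. converges_on (A n)" and B: "\<And>n. converges_on (B n)"
    and AC: "\<And>n. A n \<subseteq> C" and CB: "\<And>n. C \<subseteq> B n"
    and gap: "(\<lambda>n. emeasure \<nu> (B n - A n)) \<longlonglongrightarrow> 0"
  shows "converges_on C"
proof -
  have sets: "A n \<in> sets \<nu>" "B n \<in> sets \<nu>" and finB: "emeasure \<nu> (B n) < \<infinity>" for n
    using A B unfolding measures_converge_on_def by auto
  have finC: "emeasure \<nu> C < \<infinity>" using finB[of 0] emeasure_mono[OF CB sets(2)] by (meson le_less_trans)
  have "((\<lambda>t. measure (\<mu> t) C) \<longlongrightarrow> measure \<nu> C) at_top"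
  proof (rule tendstoI)
    fix e :: real assume "0 < e"
    then have "\<forall>\<^sub>F n in sequentially. emeasure \<nu> (B n - A n) < ennreal (e / 2)"
      using gap by (intro order_tendstoD(2)) auto
    then obtain n where "emeasure \<nu> (B n - A n) < ennreal (e / 2)"
      unfolding eventually_sequentially by blast
    moreover have "emeasure \<nu> (B n - A n) = ennreal (measure \<nu> (B n - A n))"
      using neq_top_trans[OF _ emeasure_mono[OF Diff_subset sets(2)]] finB[of n]
      by (intro emeasure_eq_ennreal_measure) (simp add: less_top)
    ultimately have "measure \<nu> (B n - A n) < e / 2" by (simp add: ennreal_less_iff)
    moreover have "measure \<nu> (B n - A n) = measure \<nu> (B n) - measure \<nu> (A n)"
      using sets finB order_trans[OF AC CB] by (intro measure_Diff) (auto simp: less_top)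
    ultimately have gap_n: "measure \<nu> (B n) - measure \<nu> (A n) < e / 2" by simp
    have \<nu>_between: "measure \<nu> (A n) \<le> measure \<nu> C" "measure \<nu> C \<le> measure \<nu> (B n)"
      using sets C finC finB[of n] AC[of n] CB[of n]
      by (auto intro!: measure_mono_fmeasurable simp: fmeasurable_def)
    have \<mu>_between: "measure (\<mu> t) (A n) \<le> measure (\<mu> t) C" "measure (\<mu> t) C \<le> measure (\<mu> t) (B n)" for t
      using sets C AC[of n] CB[of n] sets_subset[of t]
      by (auto intro!: finite_measure.finite_measure_mono[OF finite_measure])
    have "\<forall>\<^sub>F t in at_top. dist (measure (\<mu> t) (A n)) (measure \<nu> (A n)) < e / 2"
         "\<forall>\<^sub>F t in at_top. dist (measure (\<mu> t) (B n)) (measure \<nu> (B n)) < e / 2"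
      using A[of n] B[of n] \<open>0 < e\<close> unfolding measures_converge_on_def
      by (auto dest!: tendstoD[where e="e / 2"])
    then show "\<forall>\<^sub>F t in at_top. dist (measure (\<mu> t) C) (measure \<nu> C) < e"
    proof eventually_elim
      case (elim t)
      then show ?case
        using gap_n \<nu>_between \<mu>_between[of t] unfolding dist_real_def abs_less_iff by linarith
    qed
  qed
  then show ?thesis using C finC unfolding measures_converge_on_def by blast
qed

end

lemma Sset_in_borel: "Sset \<in> sets borel"
proof -
  have "{0..\<infinity>::ereal} \<times> {0<..\<infinity>::ereal} \<in> sets (borel \<Otimes>\<^sub>M borel)"
  proof (intro pair_measureI)
    have "{0<..\<infinity>::ereal} = {0<..}" by auto
    then show "{0<..\<infinity>::ereal} \<in> sets borel" by simp
  qed simp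
  then show ?thesis unfolding Sset_def borel_prod .
qed

lemma sets_radon_on_S:
  "radon_on_S \<nu> \<Longrightarrow> K \<in> sets \<nu> \<longleftrightarrow> K \<subseteq> Sset \<and> K \<in> sets borel"
  using Sset_in_borel unfolding radon_on_S_def by (simp add: sets_restrict_space_iff)

lemma closed_Int_Sset_in_sets:
  "radon_on_S \<nu> \<Longrightarrow> closed T \<Longrightarrow> Sset \<inter> T \<in> sets \<nu>"
  using Sset_in_borel by (auto simp: sets_radon_on_S)

lemma frontier_of_in_sets: "radon_on_S \<nu> \<Longrightarrow> STop frontier_of K \<in> sets \<nu>"
  using closedin_frontier_of[of STop K] closed_Int_Sset_in_sets
  unfolding STop_def closedin_closed by auto

lemma Vset_in_sets: "radon_on_S \<nu> \<Longrightarrow> Vset s t z \<in> sets \<nu>"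
proof -
  have "{s..t} \<times> {ereal z<..} \<in> sets (borel \<Otimes>\<^sub>M borel)" by (intro pair_measureI) auto
  then have "Sset \<inter> ({s..t} \<times> {ereal z<..}) \<in> sets borel"
    using Sset_in_borel unfolding borel_prod by auto
  moreover have "Vset s t z = Sset \<inter> ({s..t} \<times> {ereal z<..})" unfolding Vset_def by auto
  moreover assume "radon_on_S \<nu>"
  ultimately show ?thesis by (simp add: sets_radon_on_S)
qed

lemma emeasure_radon_on_S_finite:
  assumes \<nu>: "radon_on_S \<nu>" and K: "K \<in> sets \<nu>" "K \<subseteq> UNIV \<times> {ereal c..}" and "0 < c"
  shows "emeasure \<nu> K < \<infinity>"
proof -
  let ?L = "{0..\<infinity>::ereal} \<times> {ereal c..\<infinity>}"
  have "0 < ereal c" using \<open>0 < c\<close> by simp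
  then have "?L \<subseteq> Sset" unfolding Sset_def by (auto intro: less_le_trans[OF \<open>0 < ereal c\<close>])
  moreover have "compact ?L" by (intro compact_Times) (auto simp: compact_eq_closed)
  ultimately have "compactin STop ?L" and L_sets: "?L \<in> sets \<nu>"
    using \<nu> by (auto simp: STop_def compactin_subtopology sets_radon_on_S compact_imp_closed borel_closed)
  then have "emeasure \<nu> ?L < \<infinity>" using \<nu> unfolding radon_on_S_def by blast
  moreover have "K \<subseteq> ?L" using K \<nu> unfolding sets_radon_on_S[OF \<nu>] Sset_def by auto
  ultimately show ?thesis using L_sets by (meson emeasure_mono le_less_trans)
qed

lemma Vset_finite: "radon_on_S \<nu> \<Longrightarrow> 0 < z \<Longrightarrow> emeasure \<nu> (Vset s t z) < \<infinity>"
  by (rule emeasure_radon_on_S_finite[OF _ Vset_in_sets]) (auto simp: Vset_def less_imp_le)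

definition horizontal_line :: "real \<Rightarrow> (ereal \<times> ereal) set" where
  "horizontal_line b = Sset \<inter> {q. snd q = ereal b}"

definition vertical_segment :: "real \<Rightarrow> real \<Rightarrow> (ereal \<times> ereal) set" where
  "vertical_segment a c = Sset \<inter> {q. fst q = ereal a \<and> ereal c \<le> snd q}"

lemma horizontal_line_in_sets: "radon_on_S \<nu> \<Longrightarrow> horizontal_line b \<in> sets \<nu>"
proof -
  have "horizontal_line b = Sset \<inter> (UNIV \<times> {ereal b})" unfolding horizontal_line_def by auto
  moreover assume "radon_on_S \<nu>"
  ultimately show ?thesis by (simp add: closed_Int_Sset_in_sets closed_Times)
qed

lemma vertical_segment_in_sets: "radon_on_S \<nu> \<Longrightarrow> vertical_segment a c \<in> sets \<nu>"
proof -
  have "vertical_segment a c = Sset \<inter> ({ereal a} \<times> {ereal c..})" unfolding vertical_segment_def by auto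
  moreover assume "radon_on_S \<nu>"
  ultimately show ?thesis by (simp add: closed_Int_Sset_in_sets closed_Times)
qed

lemma continuous_imp_measurable_radon_on_S:
  "radon_on_S \<nu> \<Longrightarrow> continuous_on UNIV f \<Longrightarrow> f \<in> borel_measurable \<nu>"
  using measurable_restrict_space1[OF borel_measurable_continuous_onI]
  unfolding radon_on_S_def by (simp cong: measurable_cong_sets)

lemma countable_charged_horizontal_lines:
  assumes \<nu>: "radon_on_S \<nu>" and "0 < c"
  shows "countable {b. c \<le> b \<and> emeasure \<nu> (horizontal_line b) \<noteq> 0}"
proof -
  let ?W = "Sset \<inter> (UNIV \<times> {ereal c..})"
  have "?W \<in> sets \<nu>" using \<nu> by (intro closed_Int_Sset_in_sets closed_Times) auto
  then have "countable {y. emeasure \<nu> (snd -` {y} \<inter> ?W) \<noteq> 0}"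
    using \<nu> \<open>0 < c\<close>
    by (intro countable_charged_fibres emeasure_radon_on_S_finite continuous_imp_measurable_radon_on_S
        continuous_intros) auto
  then have "countable {b. ereal b \<in> {y. emeasure \<nu> (snd -` {y} \<inter> ?W) \<noteq> 0}}"
    by (rule countable_image_inj) (simp add: inj_def)
  moreover have "horizontal_line b = snd -` {ereal b} \<inter> ?W" if "c \<le> b" for b
    using that unfolding horizontal_line_def by auto
  ultimately show ?thesis by (auto elim!: countable_subset[rotated])
qed

lemma countable_charged_vertical_segments:
  assumes \<nu>: "radon_on_S \<nu>" and "0 < c"
  shows "countable {a. emeasure \<nu> (vertical_segment a c) \<noteq> 0}"
proof -
  let ?W = "Sset \<inter> (UNIV \<times> {ereal c..})"
  have "?W \<in> sets \<nu>" using \<nu> by (intro closed_Int_Sset_in_sets closed_Times) auto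
  then have "countable {x. emeasure \<nu> (fst -` {x} \<inter> ?W) \<noteq> 0}"
    using \<nu> \<open>0 < c\<close>
    by (intro countable_charged_fibres emeasure_radon_on_S_finite continuous_imp_measurable_radon_on_S
        continuous_intros) auto
  then have "countable {a. ereal a \<in> {x. emeasure \<nu> (fst -` {x} \<inter> ?W) \<noteq> 0}}"
    by (rule countable_image_inj) (simp add: inj_def)
  moreover have "vertical_segment a c = fst -` {ereal a} \<inter> ?W" for a
    unfolding vertical_segment_def by auto
  ultimately show ?thesis by simp
qed

lemma frontier_of_Vset_subset:
  "STop frontier_of (Vset 0 a z) \<subseteq>
     horizontal_line z \<union> Sset \<inter> {q. a \<noteq> \<infinity> \<and> fst q = a \<and> ereal z \<le> snd q}"
proof -
  let ?C = "Sset \<inter> ({0..a} \<times> {ereal z..})"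
  let ?O = "Sset \<inter> ((if a = \<infinity> then UNIV else {..<a}) \<times> {ereal z<..})"
  have "closedin STop ?C" unfolding STop_def by (intro closedin_closed_Int closed_Times) auto
  moreover have "Vset 0 a z \<subseteq> ?C" unfolding Vset_def by auto
  ultimately have closure: "STop closure_of (Vset 0 a z) \<subseteq> ?C" by (rule closure_of_minimal[rotated])
  have "openin STop ?O" unfolding STop_def by (intro openin_open_Int open_Times) auto
  moreover have "?O \<subseteq> Vset 0 a z" unfolding Vset_def Sset_def by (auto split: if_splits)
  ultimately have interior: "?O \<subseteq> STop interior_of (Vset 0 a z)" by (rule interior_of_maximal[rotated])
  show ?thesis
  proof
    fix q assume "q \<in> STop frontier_of (Vset 0 a z)"
    then have "q \<in> ?C" "q \<notin> ?O" using closure interior unfolding frontier_of_def by auto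
    then show "q \<in> horizontal_line z \<union> Sset \<inter> {q. a \<noteq> \<infinity> \<and> fst q = a \<and> ereal z \<le> snd q}"
      unfolding horizontal_line_def by (cases q) (auto split: if_splits simp: order.order_iff_strict)
  qed
qed

lemma Vset_Int_Vset: "Vset 0 a c \<inter> Vset 0 a' c' = Vset 0 (min a a') (max c c')"
  unfolding Vset_def by auto

locale vague_setting = finite_measure_family \<mu> \<nu>
  for \<mu> :: "real \<Rightarrow> (ereal \<times> ereal) measure" and \<nu> +
  assumes radon: "radon_on_S \<nu>"
    and converges_on_Vset: "\<And>a z. 0 \<le> a \<Longrightarrow> 0 < z \<Longrightarrow>
      emeasure \<nu> (STop frontier_of (Vset 0 a z)) = 0 \<Longrightarrow> converges_on (Vset 0 a z)"

locale vague_grid = vague_setting +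
  fixes \<beta> :: real and g h :: "nat \<Rightarrow> real"
  assumes \<beta>_pos: "0 < \<beta>" and \<beta>_null: "emeasure \<nu> (horizontal_line \<beta>) = 0"
    and g_pos: "\<And>k. 0 < g k" and g_null: "\<And>k. emeasure \<nu> (vertical_segment (g k) \<beta>) = 0"
    and g_dense: "\<And>u v. 0 \<le> u \<Longrightarrow> u < v \<Longrightarrow> \<exists>k. u < g k \<and> g k < v"
    and h_gt: "\<And>k. \<beta> < h k" and h_null: "\<And>k. emeasure \<nu> (horizontal_line (h k)) = 0"
    and h_dense: "\<And>u v. \<beta> \<le> u \<Longrightarrow> u < v \<Longrightarrow> \<exists>k. u < h k \<and> h k < v"
begin

abbreviation region :: "(ereal \<times> ereal) set" where
  "region \<equiv> Vset 0 \<infinity> \<beta>"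

definition quadrants :: "(ereal \<times> ereal) set set" where
  "quadrants = {Vset 0 a c | a c. a \<in> insert \<infinity> (ereal ` range g) \<and> c \<in> insert \<beta> (range h)}"

lemma quadrants_Int:
  assumes "P \<in> quadrants" "Q \<in> quadrants" shows "P \<inter> Q \<in> quadrants"
proof -
  obtain a c a' c' where PQ: "P = Vset 0 a c" "Q = Vset 0 a' c'"
    and "a \<in> insert \<infinity> (ereal ` range g)" "c \<in> insert \<beta> (range h)"
    and "a' \<in> insert \<infinity> (ereal ` range g)" "c' \<in> insert \<beta> (range h)"
    using assms unfolding quadrants_def by blast
  moreover have "min a a' \<in> {a, a'}" "max c c' \<in> {c, c'}" by (simp_all add: min_def max_def)
  ultimately have "min a a' \<in> insert \<infinity> (ereal ` range g)" "max c c' \<in> insert \<beta> (range h)"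
    by blast+
  then show ?thesis unfolding quadrants_def PQ Vset_Int_Vset by blast
qed

lemma converges_on_quadrant:
  assumes "P \<in> quadrants" shows "converges_on P"
proof -
  obtain a c where P: "P = Vset 0 a c" and a: "a \<in> insert \<infinity> (ereal ` range g)"
    and c: "c \<in> insert \<beta> (range h)"
    using assms unfolding quadrants_def by blast
  have c_ge: "\<beta> \<le> c" and c_null: "horizontal_line c \<in> null_sets \<nu>"
    using c \<beta>_null h_null h_gt less_imp_le radon horizontal_line_in_sets by auto
  have edge_null: "Sset \<inter> {q. a \<noteq> \<infinity> \<and> fst q = a \<and> ereal c \<le> snd q} \<in> null_sets \<nu>"
  proof (cases "a = \<infinity>")
    case False
    then obtain k where k: "a = ereal (g k)" using a by auto
    let ?E = "Sset \<inter> {q. a \<noteq> \<infinity> \<and> fst q = a \<and> ereal c \<le> snd q}"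
    have "?E = Sset \<inter> ({a} \<times> {ereal c..})" using k by auto
    then have "?E \<in> sets \<nu>" using radon by (simp add: closed_Int_Sset_in_sets closed_Times)
    moreover have "?E \<subseteq> vertical_segment (g k) \<beta>"
      using c_ge k unfolding vertical_segment_def by (auto intro: order_trans[rotated])
    moreover have "vertical_segment (g k) \<beta> \<in> null_sets \<nu>"
      using g_null radon vertical_segment_in_sets by auto
    ultimately show ?thesis using null_sets_subset by blast
  qed simp
  have "STop frontier_of P \<in> null_sets \<nu>"
    unfolding P by (rule null_sets_subset[OF null_sets.Un[OF c_null edge_null]
          frontier_of_in_sets[OF radon] frontier_of_Vset_subset])
  moreover have "0 \<le> a" using a g_pos by (auto simp: less_imp_le)
  ultimately show ?thesis using \<beta>_pos c_ge unfolding P by (intro converges_on_Vset) auto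
qed

text \<open>The cells of level n are the rectangles cut out of the region by the lines x = g k and
  y = h k for k < n.\<close>

definition cut_pattern :: "nat \<Rightarrow> ereal \<times> ereal \<Rightarrow> nat \<Rightarrow> bool \<times> bool" where
  "cut_pattern n q = (\<lambda>k\<in>{..<n}. (fst q \<le> ereal (g k), snd q \<le> ereal (h k)))"

definition cell :: "nat \<Rightarrow> ereal \<times> ereal \<Rightarrow> (ereal \<times> ereal) set" where
  "cell n q = {q' \<in> region. cut_pattern n q' = cut_pattern n q}"

lemma cut_pattern_eq_iff:
  "cut_pattern n q' = cut_pattern n q \<longleftrightarrow>
     (\<forall>k<n. (fst q' \<le> ereal (g k) \<longleftrightarrow> fst q \<le> ereal (g k)) \<and>
       (snd q' \<le> ereal (h k) \<longleftrightarrow> snd q \<le> ereal (h k)))"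
  unfolding cut_pattern_def by (auto simp: restrict_def fun_eq_iff)

lemma cell_in_Unions_Diff: "cell n q \<in> Unions_Diff quadrants"
proof (induction n)
  case 0
  have "region \<in> quadrants" unfolding quadrants_def by blast
  then show ?case by (simp add: cell_def cut_pattern_eq_iff in_Unions_Diff)
next
  case (Suc n)
  have R: "region \<in> quadrants" and G: "Vset 0 (ereal (g n)) \<beta> \<in> quadrants"
    and H: "Vset 0 \<infinity> (h n) \<in> quadrants"
    unfolding quadrants_def by blast+
  let ?X = "{q' \<in> region. fst q' \<le> ereal (g n) \<longleftrightarrow> fst q \<le> ereal (g n)}"
  let ?Y = "{q' \<in> region. snd q' \<le> ereal (h n) \<longleftrightarrow> snd q \<le> ereal (h n)}"
  have "cell (Suc n) q = cell n q \<inter> ?X \<inter> ?Y"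
    unfolding cell_def cut_pattern_eq_iff by (auto simp: less_Suc_eq)
  moreover have "?X = (if fst q \<le> ereal (g n) then Vset 0 (g n) \<beta> else region - Vset 0 (g n) \<beta>)"
    unfolding Vset_def by auto
  moreover have "?Y = (if snd q \<le> ereal (h n) then region - Vset 0 \<infinity> (h n) else Vset 0 \<infinity> (h n))"
    using h_gt[of n] unfolding Vset_def by (auto simp: not_le intro: less_trans[rotated])
  ultimately show ?case
    using Suc R G H by (simp add: Unions_Diff_Int quadrants_Int in_Unions_Diff Diff_in_Unions_Diff)
qed

lemma converges_on_cell: "converges_on (cell n q)"
  by (rule converges_on_Unions_Diff[OF quadrants_Int converges_on_quadrant cell_in_Unions_Diff])

lemma cell_self: "q \<in> region \<Longrightarrow> q \<in> cell n q"
  unfolding cell_def by simp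

lemma cell_subset_region: "cell n q \<subseteq> region"
  unfolding cell_def by auto

lemma cell_eq: "q' \<in> cell n q \<Longrightarrow> cell n q' = cell n q"
  unfolding cell_def by auto

lemma cell_antimono: "m \<le> n \<Longrightarrow> cell n q \<subseteq> cell m q"
  unfolding cell_def cut_pattern_eq_iff by auto

lemma finite_cells: "finite (cell n ` region)"
proof -
  have "cell n ` region \<subseteq> (\<lambda>\<sigma>. {q' \<in> region. cut_pattern n q' = \<sigma>}) ` ({..<n} \<rightarrow>\<^sub>E UNIV)"
    unfolding cell_def cut_pattern_def by auto
  then show ?thesis by (rule finite_subset) (intro finite_imageI finite_PiE; simp)
qed

lemma cell_of_member: "P \<in> cell n ` region \<Longrightarrow> q \<in> P \<Longrightarrow> P = cell n q"
  using cell_eq by blast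

lemma disjoint_cells: "disjoint (cell n ` region)"
proof (rule pairwiseI)
  fix P Q assume "P \<in> cell n ` region" "Q \<in> cell n ` region" "P \<noteq> Q"
  then show "disjnt P Q" using cell_of_member unfolding disjnt_def by blast
qed

lemma connected_cell: "connectedin STop (cell n q)"
proof -
  have "cell n q = {x. 0 \<le> x \<and> (\<forall>k<n. x \<le> ereal (g k) \<longleftrightarrow> fst q \<le> ereal (g k))}
      \<times> {y. ereal \<beta> < y \<and> (\<forall>k<n. y \<le> ereal (h k) \<longleftrightarrow> snd q \<le> ereal (h k))}"
    using \<beta>_pos unfolding cell_def cut_pattern_eq_iff Vset_def Sset_def
    by (auto intro: less_trans[of 0 "ereal \<beta>"])
  then have "connected (cell n q)"
    by (auto intro!: connected_Times connected_same_side_of_cuts)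
  moreover have "cell n q \<subseteq> Sset" using cell_subset_region unfolding Vset_def by blast
  ultimately show ?thesis unfolding STop_def by (simp add: connectedin_subtopology)
qed

lemma cell_shrinks: assumes "q \<in> region" "open U" "q \<in> U" obtains n where "cell n q \<subseteq> U"
proof -
  obtain A B where AB: "open A" "open B" "q \<in> A \<times> B" "A \<times> B \<subseteq> U"
    using open_prod_elim[OF assms(2,3)] by blast
  have q: "ereal 0 \<le> fst q" "ereal \<beta> \<le> snd q"
    using assms(1) unfolding Vset_def by (auto simp flip: zero_ereal_def)
  obtain n1 where n1: "\<And>x. ereal 0 \<le> x \<Longrightarrow>
    (\<forall>k<n1. x \<le> ereal (g k) \<longleftrightarrow> fst q \<le> ereal (g k)) \<Longrightarrow> x \<in> A"
    using dense_cuts_localize[OF g_dense AB(1) _ q(1)] AB(3) by (metis mem_Times_iff)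
  obtain n2 where n2: "\<And>y. ereal \<beta> \<le> y \<Longrightarrow>
    (\<forall>k<n2. y \<le> ereal (h k) \<longleftrightarrow> snd q \<le> ereal (h k)) \<Longrightarrow> y \<in> B"
    using dense_cuts_localize[OF h_dense AB(2) _ q(2)] AB(3) by (metis mem_Times_iff)
  have "cell (max n1 n2) q \<subseteq> A \<times> B"
  proof
    fix q' assume "q' \<in> cell (max n1 n2) q"
    then show "q' \<in> A \<times> B"
      using n1[of "fst q'"] n2[of "snd q'"] unfolding cell_def cut_pattern_eq_iff Vset_def
      by (cases q') (auto simp flip: zero_ereal_def)
  qed
  then show ?thesis using AB(4) that by blast
qed

definition cells_inside :: "nat \<Rightarrow> (ereal \<times> ereal) set \<Rightarrow> (ereal \<times> ereal) set" where
  "cells_inside n C = \<Union>{P \<in> cell n ` region. P \<subseteq> C}"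

definition cells_meeting :: "nat \<Rightarrow> (ereal \<times> ereal) set \<Rightarrow> (ereal \<times> ereal) set" where
  "cells_meeting n D = \<Union>{P \<in> cell n ` region. P \<inter> D \<noteq> {}}"

lemma converges_on_Union_cells: "F \<subseteq> cell n ` region \<Longrightarrow> converges_on (\<Union>F)"
  by (rule converges_on_disjoint_Union)
    (auto intro: finite_subset[OF _ finite_cells] converges_on_cell pairwise_subset[OF disjoint_cells])

lemma converges_on_cells_inside: "converges_on (cells_inside n C)"
  unfolding cells_inside_def by (rule converges_on_Union_cells) blast

lemma converges_on_cells_meeting: "converges_on (cells_meeting n D)"
  unfolding cells_meeting_def by (rule converges_on_Union_cells) blast

lemma subset_cells_meeting: "D \<subseteq> region \<Longrightarrow> D \<subseteq> cells_meeting n D"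
  unfolding cells_meeting_def using cell_self by blast

lemma cells_meeting_Suc: "cells_meeting (Suc n) D \<subseteq> cells_meeting n D"
proof
  fix q assume "q \<in> cells_meeting (Suc n) D"
  then obtain P where P: "P \<in> cell (Suc n) ` region" "P \<inter> D \<noteq> {}" "q \<in> P"
    unfolding cells_meeting_def by blast
  then have "q \<in> region" using cell_subset_region by blast
  moreover have "P \<subseteq> cell n q" using cell_of_member[OF P(1,3)] cell_antimono[of n "Suc n"] by simp
  ultimately show "q \<in> cells_meeting n D"
    using P(2) cell_self unfolding cells_meeting_def by blast
qed

lemma Inter_cells_meeting: assumes "closedin STop D" shows "(\<Inter>n. cells_meeting n D) \<subseteq> D"
proof
  fix q assume q: "q \<in> (\<Inter>n. cells_meeting n D)"
  obtain T where T: "closed T" "D = Sset \<inter> T"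
    using assms unfolding STop_def closedin_closed by blast
  have "q \<in> region" using q cell_subset_region unfolding cells_meeting_def by blast
  show "q \<in> D"
  proof (rule ccontr)
    assume "q \<notin> D"
    then have "q \<in> - T" using T \<open>q \<in> region\<close> unfolding Vset_def by auto
    then obtain n where "cell n q \<subseteq> - T"
      using cell_shrinks[OF \<open>q \<in> region\<close>] T(1) by blast
    moreover obtain P where "P \<in> cell n ` region" "P \<inter> D \<noteq> {}" "q \<in> P"
      using q unfolding cells_meeting_def by blast
    ultimately show False using cell_of_member T(2) by blast
  qed
qed

lemma emeasure_cells_meeting_tendsto_0:
  assumes "closedin STop D" "emeasure \<nu> D = 0"
  shows "(\<lambda>n. emeasure \<nu> (cells_meeting n D)) \<longlonglongrightarrow> 0"
proof -
  have "D \<in> sets \<nu>"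
    using assms(1) radon closed_Int_Sset_in_sets unfolding STop_def closedin_closed by blast
  then have "emeasure \<nu> (\<Inter>n. cells_meeting n D) \<le> emeasure \<nu> D"
    by (rule emeasure_mono[OF Inter_cells_meeting[OF assms(1)]])
  moreover have "(\<lambda>n. emeasure \<nu> (cells_meeting n D)) \<longlonglongrightarrow> emeasure \<nu> (\<Inter>n. cells_meeting n D)"
    by (intro Lim_emeasure_decseq decseq_SucI cells_meeting_Suc)
      (use converges_on_cells_meeting in \<open>auto simp: measures_converge_on_def less_top\<close>)
  ultimately show ?thesis using assms(2) by simp
qed

lemma cells_meeting_minus_inside:
  "cells_meeting n C - cells_inside n C \<subseteq> cells_meeting n (STop frontier_of C)"
proof
  fix q assume "q \<in> cells_meeting n C - cells_inside n C"
  then obtain P where P: "P \<in> cell n ` region" "P \<inter> C \<noteq> {}" "q \<in> P" "\<not> P \<subseteq> C"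
    unfolding cells_meeting_def cells_inside_def by blast
  then have "P \<inter> STop frontier_of C \<noteq> {}"
    using connectedin_Int_frontier_of[of STop P C] connected_cell by blast
  then show "q \<in> cells_meeting n (STop frontier_of C)"
    using P unfolding cells_meeting_def by blast
qed

lemma converges_on_subset_region:
  assumes C: "C \<in> sets \<nu>" "C \<subseteq> region" and null: "emeasure \<nu> (STop frontier_of C) = 0"
  shows "converges_on C"
proof (rule converges_on_sandwich[OF C(1)])
  show "converges_on (cells_inside n C)" "converges_on (cells_meeting n C)" for n
    by (rule converges_on_cells_inside converges_on_cells_meeting)+
  show "cells_inside n C \<subseteq> C" for n unfolding cells_inside_def by blast
  show "C \<subseteq> cells_meeting n C" for n using subset_cells_meeting[OF C(2)] .
  let ?gap = "\<lambda>n. cells_meeting n C - cells_inside n C"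
    and ?boundary_cells = "\<lambda>n. cells_meeting n (STop frontier_of C)"
  have "?boundary_cells n \<in> sets \<nu>" for n
    using converges_on_cells_meeting unfolding measures_converge_on_def by blast
  then have "\<forall>\<^sub>F n in sequentially. emeasure \<nu> (?gap n) \<le> emeasure \<nu> (?boundary_cells n)"
    using cells_meeting_minus_inside by (simp add: emeasure_mono)
  from tendsto_sandwich[OF _ this tendsto_const emeasure_cells_meeting_tendsto_0[OF closedin_frontier_of null]]
  show "(\<lambda>n. emeasure \<nu> (?gap n)) \<longlonglongrightarrow> 0" by simp
qed

end

context vague_setting
begin

lemma exists_vague_grid:
  assumes "0 < m"
  obtains \<beta> g h where "vague_grid \<mu> \<nu> \<beta> g h" "\<beta> < m"
proof -
  let ?charged = "{b. m / 2 \<le> b \<and> emeasure \<nu> (horizontal_line b) \<noteq> 0}"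
  have "countable ?charged" using assms radon by (intro countable_charged_horizontal_lines) auto
  then obtain \<beta> where \<beta>: "m / 2 < \<beta>" "\<beta> < m" "\<beta> \<notin> ?charged"
    by (rule real_between_outside_countable[of _ "m / 2" m]) (use assms in auto)
  then have "0 < \<beta>" using assms by simp
  obtain g :: "nat \<Rightarrow> real"
    where g: "\<forall>k. 0 < g k \<and> g k \<notin> {a. emeasure \<nu> (vertical_segment a \<beta>) \<noteq> 0}"
      "\<forall>u v. 0 \<le> u \<longrightarrow> u < v \<longrightarrow> (\<exists>k. u < g k \<and> g k < v)"
    using dense_sequence_avoiding[OF countable_charged_vertical_segments[OF radon \<open>0 < \<beta>\<close>]] by blast
  obtain h :: "nat \<Rightarrow> real" where h: "\<forall>k. \<beta> < h k \<and> h k \<notin> ?charged"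
      "\<forall>u v. \<beta> \<le> u \<longrightarrow> u < v \<longrightarrow> (\<exists>k. u < h k \<and> h k < v)"
    using dense_sequence_avoiding[OF \<open>countable ?charged\<close>] by blast
  have "m / 2 < h k" for k using \<beta>(1) h(1) less_trans by blast
  then have "vague_grid \<mu> \<nu> \<beta> g h"
    using \<open>0 < \<beta>\<close> \<beta>(1,3) g h by unfold_locales auto
  then show ?thesis using \<beta>(2) that by blast
qed

lemma converges_on_relatively_compact:
  assumes C: "C \<in> sets \<nu>" "compactin STop (STop closure_of C)"
    and null: "emeasure \<nu> (STop frontier_of C) = 0"
  shows "converges_on C"
proof (cases "C = {}")
  case False
  let ?K = "STop closure_of C"
  have CK: "C \<subseteq> ?K" and KS: "?K \<subseteq> Sset"
    using C(1) closure_of_subset[of C STop] closure_of_subset_topspace[of STop C]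
    unfolding sets_radon_on_S[OF radon] STop_def by auto
  have "compact (snd ` ?K)"
    using C(2) unfolding STop_def by (intro compact_continuous_image continuous_intros)
      (simp add: compactin_subtopology)
  then obtain y0 where y0: "y0 \<in> snd ` ?K" "\<And>y. y \<in> snd ` ?K \<Longrightarrow> y0 \<le> y"
    using compact_attains_inf[of "snd ` ?K"] CK False by blast
  have "0 < y0" using y0(1) KS unfolding Sset_def by auto
  then obtain m where m: "0 < ereal m" "ereal m < y0" using ereal_dense2 by blast
  then obtain \<beta> g h where "vague_grid \<mu> \<nu> \<beta> g h" "\<beta> < m"
    using exists_vague_grid[of m] by auto
  then interpret vague_grid \<mu> \<nu> \<beta> g h by simp
  have "ereal \<beta> < ereal m" using \<open>\<beta> < m\<close> by simp
  then have "ereal \<beta> < y0" using m(2) by (rule less_trans)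
  have "C \<subseteq> region"
  proof
    fix q assume "q \<in> C"
    then have "q \<in> Sset" "y0 \<le> snd q" using CK KS y0(2) by auto
    then show "q \<in> region" using \<open>ereal \<beta> < y0\<close> unfolding Vset_def Sset_def by (cases q) auto
  qed
  then show ?thesis using converges_on_subset_region C(1) null by blast
qed (simp add: converges_on_empty)

end

lemma finite_measure_scale_distr:
  assumes "finite_measure M" and "0 < t \<Longrightarrow> X \<in> M \<rightarrow>\<^sub>M N"
  shows "finite_measure (scale_measure (ennreal t) (distr M N X))"
proof (cases "0 < t")
  case True
  then interpret finite_measure "distr M N X"
    using assms by (intro finite_measure.finite_measure_distr)
  show ?thesis by (intro finite_measureI) (simp add: space_scale_measure ennreal_mult_eq_top_iff)
next
  case False
  then have "ennreal t = 0" by (simp add: ennreal_eq_0_iff)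
  then show ?thesis by (intro finite_measureI) simp
qed

lemma measures_converge_on_scale_distr_iff:
  assumes X: "\<And>t. 0 < t \<Longrightarrow> X t \<in> M \<rightarrow>\<^sub>M N" and "sets \<nu> \<subseteq> sets N"
    and K: "K \<in> sets \<nu>" "emeasure \<nu> K < \<infinity>"
  shows "measures_converge_on (\<lambda>t. scale_measure (ennreal t) (distr M N (X t))) \<nu> K \<longleftrightarrow>
    ((\<lambda>t. ennreal (t * measure M {\<omega> \<in> space M. X t \<omega> \<in> K})) \<longlongrightarrow> emeasure \<nu> K) at_top"
proof -
  have "K \<in> sets N" using K \<open>sets \<nu> \<subseteq> sets N\<close> by blast
  have "\<forall>\<^sub>F t in at_top. measure (scale_measure (ennreal t) (distr M N (X t))) K =
      t * measure M {\<omega> \<in> space M. X t \<omega> \<in> K}"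
    using eventually_gt_at_top[of 0]
    by eventually_elim (simp add: measure_distr X \<open>K \<in> sets N\<close> vimage_def Int_def conj_commute)
  moreover have "emeasure \<nu> K = ennreal (measure \<nu> K)"
    using K by (simp add: emeasure_eq_ennreal_measure less_top)
  moreover have "\<forall>\<^sub>F t in at_top. 0 \<le> t * measure M {\<omega> \<in> space M. X t \<omega> \<in> K}"
    using eventually_gt_at_top[of 0] by eventually_elim simp
  ultimately show ?thesis using K unfolding measures_converge_on_def by (simp add: tendsto_cong)
qed

lemma vague_setting_scale_distr:
  assumes "prob_space M" and X: "\<And>t. 0 < t \<Longrightarrow> X t \<in> M \<rightarrow>\<^sub>M borel" and \<nu>: "radon_on_S \<nu>"
    and Vset_limit: "\<And>a z. 0 \<le> a \<Longrightarrow> 0 < z \<Longrightarrow>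
      emeasure \<nu> (STop frontier_of (Vset 0 a z)) = 0 \<Longrightarrow>
      ((\<lambda>t. ennreal (t * measure M {\<omega> \<in> space M. X t \<omega> \<in> Vset 0 a z}))
        \<longlongrightarrow> emeasure \<nu> (Vset 0 a z)) at_top"
  shows "vague_setting (\<lambda>t. scale_measure (ennreal t) (distr M borel (X t))) \<nu>"
proof (intro vague_setting.intro finite_measure_family.intro vague_setting_axioms.intro)
  have sets_\<nu>: "sets \<nu> \<subseteq> sets borel" using sets_radon_on_S[OF \<nu>] by auto
  then show "sets \<nu> \<subseteq> sets (scale_measure (ennreal t) (distr M borel (X t)))" for t by simp
  show "finite_measure (scale_measure (ennreal t) (distr M borel (X t)))" for t
    using prob_space.finite_measure[OF assms(1)] X by (rule finite_measure_scale_distr)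
  show "radon_on_S \<nu>" by fact
  fix a z assume "0 \<le> a" "0 < z" "emeasure \<nu> (STop frontier_of (Vset 0 a z)) = 0"
  then show "measures_converge_on (\<lambda>t. scale_measure (ennreal t) (distr M borel (X t))) \<nu> (Vset 0 a z)"
    using measures_converge_on_scale_distr_iff[OF X sets_\<nu> Vset_in_sets[OF \<nu>] Vset_finite[OF \<nu>]]
      Vset_limit by simp
qed

theorem lemma5p3:
  fixes M :: "'a measure" and Z1 Z2 :: "real \<Rightarrow> 'a \<Rightarrow> real"
    and \<nu> :: "(ereal \<times> ereal) measure" and f :: "real \<Rightarrow> real"
  assumes "prob_space M"
    and "\<And>t. t > 0 \<Longrightarrow> Z1 t \<in> borel_measurable M"
    and "\<And>t. t > 0 \<Longrightarrow> Z2 t \<in> borel_measurable M"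
    and "\<And>t \<omega>. t > 0 \<Longrightarrow> \<omega> \<in> space M \<Longrightarrow> Z1 t \<omega> \<ge> 0"
    and "\<And>t \<omega>. t > 0 \<Longrightarrow> \<omega> \<in> space M \<Longrightarrow> Z2 t \<omega> \<ge> 0"
    and "radon_on_S \<nu>"
    and A: "\<And>t1 t2 z. 0 \<le> t1 \<Longrightarrow> t1 \<le> t2 \<Longrightarrow> z > 0 \<Longrightarrow>
            emeasure \<nu> (STop frontier_of (Vset t1 t2 z)) = 0 \<Longrightarrow>
            ((\<lambda>t. ennreal (t * measure M {\<omega> \<in> space M.
                 (ereal (Z1 t \<omega>), ereal (Z2 t \<omega>)) \<in> Vset t1 t2 z}))
              \<longlongrightarrow> emeasure \<nu> (Vset t1 t2 z)) at_top"
    and B: "\<And>z0. z0 > 0 \<Longrightarrow>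
            ((\<lambda>t. t * measure M {\<omega> \<in> space M.
                 (ereal (Z1 t \<omega>), ereal (Z2 t \<omega>)) \<in> Vset 0 \<infinity> z0})
              \<longlongrightarrow> f z0) at_top \<and> f z0 > 0"
  shows "vague_tendsto
           (\<lambda>t C. ennreal (t * measure M {\<omega> \<in> space M. (ereal (Z1 t \<omega>), ereal (Z2 t \<omega>)) \<in> C}))
           \<nu>"
proof -
  define X where "X t \<omega> = (ereal (Z1 t \<omega>), ereal (Z2 t \<omega>))" for t \<omega>
  have X: "X t \<in> M \<rightarrow>\<^sub>M borel" if "0 < t" for t
    using assms(2,3)[OF that] unfolding X_def borel_prod[symmetric] by measurable
  interpret vague_setting "\<lambda>t. scale_measure (ennreal t) (distr M borel (X t))" \<nu>
    using vague_setting_scale_distr[OF assms(1) X assms(6)] A by (simp add: X_def)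
  have sets_\<nu>: "sets \<nu> \<subseteq> sets borel" using sets_radon_on_S[OF assms(6)] by auto
  show ?thesis unfolding vague_tendsto_def
  proof (intro allI impI)
    fix C assume "C \<subseteq> Sset \<and> C \<in> sets \<nu> \<and> compactin STop (STop closure_of C) \<and>
      emeasure \<nu> (STop frontier_of C) = 0"
    then have "converges_on C" by (intro converges_on_relatively_compact) auto
    moreover have "C \<in> sets \<nu>" "emeasure \<nu> C < \<infinity>"
      using calculation unfolding measures_converge_on_def by auto
    ultimately show "((\<lambda>t. ennreal (t * measure M {\<omega> \<in> space M. (ereal (Z1 t \<omega>), ereal (Z2 t \<omega>)) \<in> C}))
        \<longlongrightarrow> emeasure \<nu> C) at_top"
      using measures_converge_on_scale_distr_iff[OF X sets_\<nu>] by (simp add: X_def)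
  qed
qed

end
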